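(* Let $\mathbb{F}$ be a field of characteristic $0$, let $0\neq h\in\mathbb{F}[x]$, and let $A=A_h$ be the unital $\mathbb{F}$-algebra generated by $x$ and $\hat y$ subject to $\hat y x-x\hat y=h$. Then there are isomorphisms $$\mathrm{HH}^2(A)\cong A/\gcd(h,h')A\cong \mathsf{D}[\hat y],$$ where $\mathsf{D}=\mathbb{F}[x]/\gcd(h,h')\mathbb{F}[x]$. In particular, $\mathrm{HH}^2(A)=0$ if and only if $\gcd(h,h')=1$, i.e. if and only if $h$ is separable; otherwise $\mathrm{HH}^2(A)$ is infinite dimensional.
   Context: $h'$ is the derivative of $h$; $\gcd$ is monic. $\gcd(h,h')A$ is a two-sided ideal of $A$ (every factor of $h$ is a normal element of $A$). $\mathsf{D}[\hat y]$ denotes the polynomial ring in one variable $\hat y$ over $\mathsf{D}$. $\mathrm{HH}^2(A)$ is the second Hochschild cohomology of $A$ with coefficients in $A$. *)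

theory Defs
  imports "HOL-Computational_Algebra.Polynomial" "HOL-Computational_Algebra.Polynomial_Factorial"
begin

text \<open>The algebra A_h = F<x, y> / (y x - x y - h), modelled by its normal form:
  an element is a polynomial in y with coefficients in F[x] (left coefficients),
  i.e. sum_j p_j(x) y^j, stored as a term of type 'a poly poly.  The product is the
  Ore-extension product for the derivation d = h * d/dx:
  (p y^j)(q y^k) = sum_l (j choose l) p d^l(q) y^(j+k-l).\<close>

definition hder :: "'a::field poly \<Rightarrow> 'a poly \<Rightarrow> 'a poly" where
  "hder h p = h * pderiv p"

definition amult :: "'a::field poly \<Rightarrow> 'a poly poly \<Rightarrow> 'a poly poly \<Rightarrow> 'a poly poly" where
  "amult h a b = (\<Sum>j\<le>degree a. \<Sum>k\<le>degree b. \<Sum>l\<le>j.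
      monom (of_nat (j choose l) * coeff a j * (hder h ^^ l) (coeff b k)) (j + k - l))"

definition gen_x :: "'a::field poly poly" where "gen_x = [:[:0, 1:]:]"
definition gen_y :: "'a::field poly poly" where "gen_y = [:0, 1:]"
definition aone :: "'a::field poly poly" where "aone = 1"

definition ascal :: "'a::field \<Rightarrow> 'a poly poly \<Rightarrow> 'a poly poly" where
  "ascal c a = smult [:c:] a"

definition flinear :: "('a::field poly poly \<Rightarrow> 'a poly poly) \<Rightarrow> bool" where
  "flinear f \<longleftrightarrow> (\<forall>a b. f (a + b) = f a + f b) \<and> (\<forall>c a. f (ascal c a) = ascal c (f a))"

definition fbilinear :: "('a::field poly poly \<Rightarrow> 'a poly poly \<Rightarrow> 'a poly poly) \<Rightarrow> bool" where
  "fbilinear c \<longleftrightarrow> (\<forall>a. flinear (c a)) \<and> (\<forall>b. flinear (\<lambda>a. c a b))"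

definition hoch_cocycle2 :: "'a::field poly \<Rightarrow> ('a poly poly \<Rightarrow> 'a poly poly \<Rightarrow> 'a poly poly) \<Rightarrow> bool" where
  "hoch_cocycle2 h c \<longleftrightarrow> fbilinear c \<and>
     (\<forall>a b e. amult h a (c b e) - c (amult h a b) e + c a (amult h b e) - amult h (c a b) e = 0)"

definition hoch_coboundary2 :: "'a::field poly \<Rightarrow> ('a poly poly \<Rightarrow> 'a poly poly \<Rightarrow> 'a poly poly) \<Rightarrow> bool" where
  "hoch_coboundary2 h c \<longleftrightarrow> (\<exists>f. flinear f \<and>
     c = (\<lambda>a b. amult h a (f b) - f (amult h a b) + amult h (f a) b))"

definition HH2_zero :: "'a::field poly \<Rightarrow> bool" where
  "HH2_zero h \<longleftrightarrow> (\<forall>c. hoch_cocycle2 h c \<longrightarrow> hoch_coboundary2 h c)"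

definition HH2_infinite_dim :: "'a::field poly \<Rightarrow> bool" where
  "HH2_infinite_dim h \<longleftrightarrow> (\<forall>n. \<exists>cs :: nat \<Rightarrow> ('a poly poly \<Rightarrow> 'a poly poly \<Rightarrow> 'a poly poly).
      (\<forall>i<n. hoch_cocycle2 h (cs i)) \<and>
      (\<forall>k :: nat \<Rightarrow> 'a. hoch_coboundary2 h (\<lambda>a b. \<Sum>i<n. ascal (k i) (cs i a b))
           \<longrightarrow> (\<forall>i<n. k i = 0)))"

definition in_ideal :: "'a::field poly \<Rightarrow> 'a poly \<Rightarrow> 'a poly poly \<Rightarrow> bool" where
  "in_ideal h g a \<longleftrightarrow> (\<exists>b. a = amult h [:g:] b)"

text \<open>D[y] with D = F[x]/(g) is represented as the commutative ring F[x][y] modulo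
  the ideal g F[x][y]; this predicate is membership in that ideal.\<close>
definition in_Dker :: "'a::field poly \<Rightarrow> 'a poly poly \<Rightarrow> bool" where
  "in_Dker g p \<longleftrightarrow> [:g:] dvd p"

end

theory Submission
  imports Defs
begin

text \<open>A 2-cocycle \<open>c\<close> is classified by its obstruction, the value of \<open>c\<close> on the
  defining relation \<open>y x - x y - h\<close>: every \<open>w \<in> A\<close> is the obstruction of some cocycle, and a
  cocycle is a coboundary iff its obstruction lies in the image of
  \<open>d(u, v) = [y, u] + [v, x] - \<delta>\<^sub>u(h)\<close>, where \<open>\<delta>\<^sub>u : F[x] \<rightarrow> A\<close> is the derivation with
  \<open>x \<mapsto> u\<close>; thus \<open>HH\<^sup>2(A) \<cong> A / im d\<close>. Modulo \<open>g = gcd(h, h')\<close> the product of \<open>A\<close> is the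
  commutative one, so \<open>d(u, v) \<equiv> - h' u \<equiv> 0\<close> and \<open>im d \<subseteq> g A\<close>; conversely the Bezout
  identity \<open>\<alpha> h + \<beta> h' = g\<close> produces every leading coefficient \<open>g s\<close>, and induction on the
  \<open>y\<close>-degree gives \<open>im d = g A\<close>. Hence \<open>HH\<^sup>2(A) \<cong> A / g A\<close>, and \<open>A / g A \<cong> D[y]\<close> by reducing
  coefficients modulo \<open>g\<close>.\<close>

lemma additive_funpow:
  fixes f :: "'a::ab_group_add \<Rightarrow> 'a"
  shows "additive f \<Longrightarrow> additive (f ^^ n)"
  by (induction n) (simp_all add: additive_def)

lemma smult_sum_right: "smult c (\<Sum>i\<in>S. f i) = (\<Sum>i\<in>S. smult c (f i))"
  by (rule poly_eqI) (simp add: coeff_sum sum_distrib_left)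

lemma smult_const_1 [simp]: "smult [:1:] p = (p :: 'a::comm_semiring_1 poly poly)"
  by (metis one_pCons smult_1_left)

lemma const_mult_monom_1: "[:c:] * monom 1 n = monom (c::'a::comm_semiring_1) n"
  by (simp add: smult_monom)

lemma degree_le_pred:
  assumes "degree p \<le> Suc j" "coeff p (Suc j) = 0"
  shows "degree p \<le> j"
proof (rule degree_le, intro allI impI)
  fix i assume "j < i"
  then consider "i = Suc j" | "i > Suc j" by linarith
  then show "coeff p i = 0" using assms by cases (auto simp: coeff_eq_0)
qed

lemma const_dvd_smult: "[:g:] dvd z \<Longrightarrow> [:g:] dvd smult p z"
  using dvd_mult[of "[:g:]" z "[:p:]"] by simp

lemma const_dvd_smult_const:
  fixes g p :: "'a::field poly"
  assumes "g dvd p"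
  shows "[:g:] dvd smult p z"
proof -
  have "[:g:] dvd [:p:]"
    using assms by (simp add: const_poly_dvd_const_poly_iff)
  then have "[:g:] dvd [:p:] * z"
    by (rule dvd_mult2)
  then show ?thesis
    by simp
qed

lemma gcd_eq_1_if_dvd_const:
  fixes a b :: "'a::field_gcd poly"
  assumes "gcd a b dvd [:k:]" "k \<noteq> 0"
  shows "gcd a b = 1"
proof -
  have "is_unit [:k:]"
    using assms(2) by (simp add: is_unit_triv)
  then show ?thesis
    using assms(1) by (metis dvd_unit_imp_unit is_unit_gcd_iff)
qed

section \<open>The algebra \<open>A\<close>\<close>

lemma hder_add: "hder h (p + q) = hder h p + hder h q"
  by (simp add: hder_def pderiv_add algebra_simps)

interpretation hder: additive "hder h" for h
  by unfold_locales (rule hder_add)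

declare hder.zero [simp]

lemma hder_mult: "hder h (p * q) = p * hder h q + hder h p * q"
  by (simp add: hder_def pderiv_mult algebra_simps)

lemma hder_const [simp]: "hder h [:c:] = 0"
  by (simp add: hder_def)

lemma hder_1 [simp]: "hder h 1 = 0"
  by (simp add: hder_def)

lemma hder_X: "hder h [:0, 1:] = h"
  by (simp add: hder_def pderiv_pCons)

lemma hder_of_nat_mult: "hder h (of_nat n * p) = of_nat n * hder h p"
  by (simp add: hder_mult) (simp add: hder_def)

text \<open>Left multiplication by \<open>y\<close> on normal forms: \<open>y p(x) = p(x) y + h p'(x)\<close>, since
  \<open>y x = x y + h\<close>.\<close>

definition ymult :: "'a::field poly \<Rightarrow> 'a poly poly \<Rightarrow> 'a poly poly" where
  "ymult h b = pCons 0 b + map_poly (hder h) b"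

lemma coeff_ymult:
  "coeff (ymult h b) n = (case n of 0 \<Rightarrow> 0 | Suc m \<Rightarrow> coeff b m) + hder h (coeff b n)"
  by (simp add: ymult_def coeff_map_poly coeff_pCons)

interpretation ymult: additive "ymult h" for h
  by unfold_locales (rule poly_eqI, simp add: coeff_ymult hder.add split: nat.split)

interpretation ymult_pow: additive "ymult h ^^ j" for h j
  by (rule additive_funpow, unfold_locales) (fact ymult.add)

declare ymult.zero [simp] ymult_pow.zero [simp]

lemma ymult_monom: "ymult h (monom q n) = monom q (Suc n) + monom (hder h q) n"
  by (rule poly_eqI) (auto simp: coeff_ymult split: nat.split)

lemma ymult_smult: "ymult h (smult p z) = smult p (ymult h z) + smult (hder h p) z"
  by (rule poly_eqI) (auto simp: coeff_ymult hder_mult algebra_simps split: nat.split)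

lemma funpow_ymult_smult_const: "(ymult h ^^ j) (smult [:k:] z) = smult [:k:] ((ymult h ^^ j) z)"
  by (induction j) (simp_all add: ymult_smult)

lemma funpow_ymult_pCons_0: "(ymult h ^^ j) (pCons 0 z) = pCons 0 ((ymult h ^^ j) z)"
proof -
  have "ymult h (pCons 0 z) = pCons 0 (ymult h z)" for z
    by (rule poly_eqI) (auto simp: coeff_ymult coeff_pCons split: nat.split)
  then show ?thesis by (induction j) simp_all
qed

lemma funpow_ymult_1: "(ymult h ^^ j) 1 = monom 1 j"
  by (induction j) (simp_all add: ymult_monom flip: monom_0 one_pCons)

lemma degree_funpow_ymult: "degree ((ymult h ^^ j) z) \<le> degree z + j"
proof (induction j)
  case (Suc j)
  have "degree (ymult h p) \<le> degree p + 1" for p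
    by (rule degree_le) (auto simp: coeff_ymult coeff_eq_0 split: nat.split)
  then show ?case using Suc order_trans by fastforce
qed simp

lemma funpow_ymult_monom:
  "(ymult h ^^ j) (monom q k) = (\<Sum>l\<le>j. monom (of_nat (j choose l) * (hder h ^^ l) q) (j + k - l))"
proof (induction j)
  case 0
  then show ?case by simp
next
  case (Suc j)
  define shifted where
    "shifted l = monom (of_nat (j choose l) * (hder h ^^ l) q) (Suc (j + k - l))" for l
  define derived where
    "derived l = monom (of_nat (j choose l) * (hder h ^^ Suc l) q) (j + k - l)" for l
  define pascal where
    "pascal l = monom (of_nat (j choose Suc l) * (hder h ^^ Suc l) q) (j + k - l)" for l
  define target where
    "target l = monom (of_nat (Suc j choose l) * (hder h ^^ l) q) (Suc j + k - l)" for l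
  have "(ymult h ^^ Suc j) (monom q k) = (\<Sum>l\<le>j. shifted l) + (\<Sum>l\<le>j. derived l)"
    by (simp add: Suc ymult.sum ymult_monom hder_of_nat_mult shifted_def derived_def sum.distrib)
  also have "(\<Sum>l\<le>j. shifted l) = (\<Sum>l\<le>Suc j. shifted l)"
    by (simp add: shifted_def binomial_eq_0)
  also have "\<dots> = shifted 0 + (\<Sum>l\<le>j. pascal l)"
    unfolding sum.atMost_Suc_shift
    by (intro arg_cong2[where f = "(+)"] refl sum.cong)
      (auto simp: shifted_def pascal_def Suc_diff_Suc le_less binomial_eq_0)
  also have "shifted 0 + (\<Sum>l\<le>j. pascal l) + (\<Sum>l\<le>j. derived l) = (\<Sum>l\<le>Suc j. target l)"
  proof -
    have pointwise: "target (Suc l) = pascal l + derived l" for l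
      by (simp add: pascal_def derived_def target_def add_monom[symmetric] algebra_simps)
    show ?thesis
      by (simp only: sum.atMost_Suc_shift pointwise sum.distrib add.assoc)
        (simp add: shifted_def target_def)
  qed
  finally show ?case by (simp add: target_def)
qed

definition coeff_comb :: "(nat \<Rightarrow> 'b::comm_ring_1 poly) \<Rightarrow> 'b poly \<Rightarrow> 'b poly" where
  "coeff_comb G a = (\<Sum>j\<le>degree a. smult (coeff a j) (G j))"

lemma coeff_comb_bound:
  "degree a \<le> N \<Longrightarrow> coeff_comb G a = (\<Sum>j\<le>N. smult (coeff a j) (G j))"
  unfolding coeff_comb_def by (rule sum.mono_neutral_left) (auto simp: coeff_eq_0)

interpretation coeff_comb: additive "coeff_comb G"
proof
  fix a b :: "'a poly"
  define N where "N = max (degree a) (degree b)"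
  have "degree (a + b) \<le> N" "degree a \<le> N" "degree b \<le> N"
    using degree_add_le_max[of a b] by (auto simp: N_def)
  then show "coeff_comb G (a + b) = coeff_comb G a + coeff_comb G b"
    by (simp add: coeff_comb_bound[of _ N] sum.distrib smult_add_left)
qed

lemma coeff_comb_smult: "coeff_comb G (smult p a) = smult p (coeff_comb G a)"
proof -
  have "coeff_comb G (smult p a) = (\<Sum>j\<le>degree a. smult (coeff (smult p a) j) (G j))"
    by (rule coeff_comb_bound) (rule degree_smult_le)
  then show ?thesis by (simp add: smult_sum_right coeff_comb_def)
qed

lemma coeff_comb_monom: "coeff_comb G (monom q k) = smult q (G k)"
  by (simp add: coeff_comb_bound[OF degree_monom_le] sum.remove[of _ k])

lemma coeff_comb_const: "coeff_comb G [:p:] = smult p (G 0)"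
  using coeff_comb_monom[of G p 0] by (simp add: monom_0)

lemma coeff_comb_pCons_0: "coeff_comb G (pCons 0 a) = coeff_comb (\<lambda>j. G (Suc j)) a"
proof -
  have "coeff_comb G (pCons 0 a) = (\<Sum>j\<le>Suc (degree a). smult (coeff (pCons 0 a) j) (G j))"
    by (rule coeff_comb_bound) (rule degree_pCons_le)
  also have "\<dots> = (\<Sum>j\<le>degree a. smult (coeff a j) (G (Suc j)))"
    by (subst sum.atMost_Suc_shift) simp
  finally show ?thesis by (simp add: coeff_comb_def)
qed

lemma coeff_comb_fun_add: "coeff_comb (\<lambda>j. G j + H j) a = coeff_comb G a + coeff_comb H a"
  by (simp add: coeff_comb_def smult_add_right sum.distrib)

lemma coeff_comb_fun_diff: "coeff_comb (\<lambda>j. G j - H j) a = coeff_comb G a - coeff_comb H a"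
  by (simp add: coeff_comb_def smult_diff_right sum_subtractf)

lemma coeff_comb_fun_pCons_0: "coeff_comb (\<lambda>j. pCons 0 (G j)) a = pCons 0 (coeff_comb G a)"
proof -
  have pCons_sum: "pCons 0 (\<Sum>i\<in>S. f i) = (\<Sum>i\<in>S. pCons 0 (f i))"
    for S and f :: "nat \<Rightarrow> 'b::comm_ring_1 poly"
    by (rule poly_eqI) (simp add: coeff_pCons coeff_sum split: nat.split)
  show ?thesis by (simp add: coeff_comb_def pCons_sum)
qed

lemma coeff_comb_fun_smult: "coeff_comb (\<lambda>j. smult c (G j)) a = smult c (coeff_comb G a)"
  by (simp add: coeff_comb_def smult_sum_right ac_simps)

lemma coeff_comb_monom_1: "coeff_comb (monom 1) a = a"
  by (simp add: coeff_comb_def smult_monom poly_as_sum_of_monoms)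

lemma mult_eq_coeff_comb: "a * b = coeff_comb (\<lambda>j. monom 1 j * b) a"
proof -
  have "a * b = (\<Sum>j\<le>degree a. monom (coeff a j) j) * b"
    by (simp add: poly_as_sum_of_monoms)
  also have "\<dots> = coeff_comb (\<lambda>j. monom 1 j * b) a"
    by (simp add: coeff_comb_def sum_distrib_right smult_monom flip: mult_smult_left)
  finally show ?thesis .
qed

lemma funpow_ymult:
  "(ymult h ^^ j) b =
    (\<Sum>k\<le>degree b. \<Sum>l\<le>j. monom (of_nat (j choose l) * (hder h ^^ l) (coeff b k)) (j + k - l))"
  by (subst (1) poly_as_sum_of_monoms[symmetric]) (simp only: ymult_pow.sum funpow_ymult_monom)

lemma amult_eq_coeff_comb: "amult h a b = coeff_comb (\<lambda>j. (ymult h ^^ j) b) a"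
  unfolding amult_def coeff_comb_def funpow_ymult
  by (intro sum.cong refl) (simp add: smult_sum_right smult_monom ac_simps)

interpretation amult_left: additive "\<lambda>a. amult h a b" for h b
  by unfold_locales (simp add: amult_eq_coeff_comb coeff_comb.add)

interpretation amult_right: additive "amult h a" for h a
  by unfold_locales (simp add: amult_eq_coeff_comb ymult_pow.add coeff_comb_fun_add)

declare amult_left.zero [simp] amult_right.zero [simp]

lemma amult_smult_left: "amult h (smult p a) b = smult p (amult h a b)"
  by (simp add: amult_eq_coeff_comb coeff_comb_smult)

lemma amult_monom_left: "amult h (monom q k) b = smult q ((ymult h ^^ k) b)"
  by (simp add: amult_eq_coeff_comb coeff_comb_monom)

lemma amult_const_left: "amult h [:p:] b = smult p b"
  by (simp add: amult_eq_coeff_comb coeff_comb_const)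

lemma amult_1_left [simp]: "amult h 1 b = b"
  using amult_const_left[of h 1 b] by (simp add: pCons_one)

lemma amult_1_right [simp]: "amult h a 1 = a"
  by (simp add: amult_eq_coeff_comb funpow_ymult_1 coeff_comb_monom_1)

lemma amult_pCons_0_right: "amult h a (pCons 0 b) = pCons 0 (amult h a b)"
  by (simp add: amult_eq_coeff_comb funpow_ymult_pCons_0 coeff_comb_fun_pCons_0)

lemma amult_smult_const_right: "amult h a (smult [:k:] b) = smult [:k:] (amult h a b)"
  by (simp add: amult_eq_coeff_comb funpow_ymult_smult_const coeff_comb_fun_smult)

lemma amult_ascal_left: "amult h (ascal k a) b = ascal k (amult h a b)"
  by (simp add: ascal_def amult_smult_left)

lemma amult_ascal_right: "amult h a (ascal k b) = ascal k (amult h a b)"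
  by (simp add: ascal_def amult_smult_const_right)

lemma ymult_amult: "ymult h (amult h b e) = amult h (ymult h b) e"
proof -
  have "ymult h (amult h b e) =
      (\<Sum>j\<le>degree b. smult (coeff b j) ((ymult h ^^ Suc j) e) +
        smult (hder h (coeff b j)) ((ymult h ^^ j) e))"
    by (simp add: amult_eq_coeff_comb coeff_comb_def ymult.sum ymult_smult)
  also have "\<dots> = amult h (pCons 0 b) e + amult h (map_poly (hder h) b) e"
    by (simp add: amult_eq_coeff_comb coeff_comb_pCons_0 sum.distrib coeff_map_poly
        coeff_comb_bound[OF map_poly_degree_leq] coeff_comb_def[of _ b])
  also have "\<dots> = amult h (ymult h b) e"
    by (simp add: ymult_def amult_left.add)
  finally show ?thesis .
qed

lemma amult_assoc: "amult h a (amult h b e) = amult h (amult h a b) e"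
proof -
  have "(ymult h ^^ j) (amult h b e) = amult h ((ymult h ^^ j) b) e" for j
    by (induction j) (simp_all add: ymult_amult)
  then have "amult h a (amult h b e) = coeff_comb (\<lambda>j. amult h ((ymult h ^^ j) b) e) a"
    by (simp add: amult_eq_coeff_comb[of h a])
  also have "\<dots> = amult h (amult h a b) e"
    by (simp add: amult_eq_coeff_comb[of h a b] coeff_comb_def amult_left.sum amult_smult_left)
  finally show ?thesis .
qed

lemma degree_amult: "degree (amult h a b) \<le> degree a + degree b"
  unfolding amult_eq_coeff_comb coeff_comb_def
proof (rule degree_sum_le)
  fix j assume "j \<in> {..degree a}"
  then show "degree (smult (coeff a j) ((ymult h ^^ j) b)) \<le> degree a + degree b"
    using degree_funpow_ymult[where h = h and j = j and z = b]
      degree_smult_le[of "coeff a j" "(ymult h ^^ j) b"] by auto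
qed simp

definition x_pow :: "nat \<Rightarrow> 'a::field poly poly" where
  "x_pow n = [:monom 1 n:]"

definition xy_monom :: "nat \<Rightarrow> nat \<Rightarrow> 'a::field poly poly" where
  "xy_monom n j = monom (monom 1 n) j"

lemma x_pow_0: "x_pow 0 = 1"
  by (simp add: x_pow_def pCons_one)

lemma x_pow_1: "x_pow (Suc 0) = gen_x"
  by (simp add: x_pow_def gen_x_def monom_Suc monom_0 pCons_one)

lemma xy_monom_0: "xy_monom n 0 = x_pow n"
  by (simp add: xy_monom_def x_pow_def monom_0)

lemma gen_y_eq: "gen_y = monom 1 1" "gen_y = pCons 0 1"
  by (simp_all add: gen_y_def monom_Suc monom_0 pCons_one)

lemma amult_gen_x_left: "amult h gen_x b = smult [:0, 1:] b"
  by (simp add: gen_x_def amult_const_left)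

lemma amult_gen_y_left: "amult h gen_y b = ymult h b"
  by (simp add: gen_y_eq(1) amult_monom_left)

lemma amult_gen_y_right: "amult h a gen_y = pCons 0 a"
  by (simp add: gen_y_eq(2) amult_pCons_0_right)

lemma pCons_eq_const_plus_amult_gen_y: "pCons c0 b = [:c0:] + amult h b gen_y"
  by (simp add: amult_gen_y_right)

lemma amult_x_pow_left: "amult h (x_pow n) b = smult (monom 1 n) b"
  by (simp add: x_pow_def amult_const_left)

lemma amult_x_pow_x_pow: "amult h (x_pow m) (x_pow n) = x_pow (m + n)"
  unfolding amult_x_pow_left by (simp add: x_pow_def mult_monom)

lemma amult_gen_x_x_pow: "amult h gen_x (x_pow n) = x_pow (Suc n)"
  by (simp add: amult_gen_x_left x_pow_def monom_Suc)

lemma amult_xy_monom_gen_y: "amult h (xy_monom n j) gen_y = xy_monom n (Suc j)"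
  by (simp add: amult_gen_y_right xy_monom_def monom_Suc)

lemma amult_gen_x_gen_y: "amult h gen_x gen_y = xy_monom 1 1"
  by (simp add: amult_gen_y_right xy_monom_def gen_x_def monom_Suc monom_0)

lemma amult_gen_y_gen_x: "amult h gen_y gen_x = amult h gen_x gen_y + [:h:]"
  by (simp add: amult_gen_y_left amult_gen_y_right gen_x_def ymult_def hder_X map_poly_pCons)

section \<open>Linear maps and Hochschild cochains\<close>

lemma ascal_0 [simp]: "ascal k 0 = 0"
  by (simp add: ascal_def)

lemma ascal_0_left [simp]: "ascal 0 z = 0"
  by (simp add: ascal_def)

lemma ascal_1 [simp]: "ascal 1 z = z"
  by (simp add: ascal_def one_pCons[symmetric])

lemma ascal_add_left: "ascal (a + b) z = ascal a z + ascal b z"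
proof -
  have "[:a + b:] = [:a:] + [:b:]" by simp
  then show ?thesis by (simp only: ascal_def smult_add_left)
qed

lemma ascal_mult: "ascal (a * b) z = ascal a (ascal b z)"
  by (simp add: ascal_def mult.commute)

lemma ascal_sum_right: "ascal k (\<Sum>i\<in>S. f i) = (\<Sum>i\<in>S. ascal k (f i))"
  by (simp add: ascal_def smult_sum_right)

lemma coeff_ascal [simp]: "coeff (ascal c a) n = smult c (coeff a n)"
  by (simp add: ascal_def)

lemma flinear_additive: "flinear f \<Longrightarrow> additive f"
  by (simp add: flinear_def additive_def)

lemmas flinear_zero = additive.zero[OF flinear_additive]
lemmas flinear_add = additive.add[OF flinear_additive]
lemmas flinear_sum = additive.sum[OF flinear_additive]

lemma flinear_ascal: "flinear f \<Longrightarrow> f (ascal c a) = ascal c (f a)"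
  by (simp add: flinear_def)

lemma flinear_id: "flinear (\<lambda>a. a)"
  by (simp add: flinear_def)

lemma flinear_comp: "flinear f \<Longrightarrow> flinear g \<Longrightarrow> flinear (\<lambda>a. f (g a))"
  by (simp add: flinear_def)

lemma flinear_add_fun: "flinear f \<Longrightarrow> flinear g \<Longrightarrow> flinear (\<lambda>a. f a + g a)"
  by (simp add: flinear_def ascal_def smult_add_right)

lemma flinear_diff_fun: "flinear f \<Longrightarrow> flinear g \<Longrightarrow> flinear (\<lambda>a. f a - g a)"
  by (simp add: flinear_def ascal_def smult_diff_right)

lemma flinear_minus_fun: "flinear f \<Longrightarrow> flinear (\<lambda>a. - f a)"
  by (simp add: flinear_def ascal_def)

lemma flinear_amult_left: "flinear (\<lambda>a. amult h a b)"
  by (simp add: flinear_def amult_left.add amult_ascal_left)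

lemma flinear_amult_right: "flinear (amult h a)"
  by (simp add: flinear_def amult_right.add amult_ascal_right)

lemma flinear_ascal_const_coeff: "flinear (\<lambda>a. ascal (coeff (coeff a 0) 0) z)"
  by (simp add: flinear_def ascal_add_left ascal_mult)

definition lincomb_x :: "(nat \<Rightarrow> 'a::field poly poly) \<Rightarrow> 'a poly \<Rightarrow> 'a poly poly" where
  "lincomb_x G p = (\<Sum>n\<le>degree p. ascal (coeff p n) (G n))"

definition lincomb_xy :: "(nat \<Rightarrow> nat \<Rightarrow> 'a::field poly poly) \<Rightarrow> 'a poly poly \<Rightarrow> 'a poly poly" where
  "lincomb_xy F a = (\<Sum>j\<le>degree a. lincomb_x (\<lambda>n. F n j) (coeff a j))"

lemma lincomb_x_bound:
  "degree p \<le> N \<Longrightarrow> lincomb_x G p = (\<Sum>n\<le>N. ascal (coeff p n) (G n))"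
  unfolding lincomb_x_def by (rule sum.mono_neutral_left) (auto simp: coeff_eq_0)

interpretation lincomb_x: additive "lincomb_x G"
proof
  fix p q :: "'a poly"
  define N where "N = max (degree p) (degree q)"
  have "degree (p + q) \<le> N" "degree p \<le> N" "degree q \<le> N"
    using degree_add_le_max[of p q] by (auto simp: N_def)
  then show "lincomb_x G (p + q) = lincomb_x G p + lincomb_x G q"
    by (simp add: lincomb_x_bound[of _ N] ascal_add_left sum.distrib)
qed

declare lincomb_x.zero [simp]

lemma lincomb_x_smult: "lincomb_x G (smult c p) = ascal c (lincomb_x G p)"
proof -
  have "lincomb_x G (smult c p) = (\<Sum>n\<le>degree p. ascal (coeff (smult c p) n) (G n))"
    by (rule lincomb_x_bound) (rule degree_smult_le)
  then show ?thesis by (simp add: ascal_mult ascal_sum_right lincomb_x_def)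
qed

lemma lincomb_x_monom: "lincomb_x G (monom c k) = ascal c (G k)"
  by (simp add: lincomb_x_bound[OF degree_monom_le] sum.remove[of _ k])

lemma lincomb_x_pCons_0: "lincomb_x G (pCons 0 p) = lincomb_x (\<lambda>k. G (Suc k)) p"
proof -
  have "lincomb_x G (pCons 0 p) = (\<Sum>j\<le>Suc (degree p). ascal (coeff (pCons 0 p) j) (G j))"
    by (rule lincomb_x_bound) (rule degree_pCons_le)
  also have "\<dots> = (\<Sum>j\<le>degree p. ascal (coeff p j) (G (Suc j)))"
    by (subst sum.atMost_Suc_shift) simp
  finally show ?thesis by (simp add: lincomb_x_def)
qed

lemma lincomb_x_fun_0 [simp]: "lincomb_x (\<lambda>k. 0) p = 0"
  by (simp add: lincomb_x_def)

lemma lincomb_x_fun_add: "lincomb_x (\<lambda>k. F k + G k) p = lincomb_x F p + lincomb_x G p"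
  by (simp add: lincomb_x_def ascal_def smult_add_right sum.distrib)

lemma lincomb_x_fun_smult: "lincomb_x (\<lambda>k. smult q (G k)) p = smult q (lincomb_x G p)"
  by (simp add: lincomb_x_def ascal_def smult_sum_right mult.commute)

lemma lincomb_x_x_pow: "lincomb_x x_pow r = [:r:]"
proof -
  have "lincomb_x x_pow r = (\<Sum>n\<le>degree r. monom (monom (coeff r n) n) 0)"
    unfolding lincomb_x_def by (rule sum.cong) (simp_all add: ascal_def x_pow_def smult_monom monom_0)
  also have "\<dots> = [:r:]"
    by (simp only: monom_sum[symmetric] poly_as_sum_of_monoms flip: monom_0)
  finally show ?thesis .
qed

lemma flinear_lincomb_x: "flinear f \<Longrightarrow> f (lincomb_x G p) = lincomb_x (\<lambda>n. f (G n)) p"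
  by (simp add: lincomb_x_def flinear_sum flinear_ascal)

lemma lincomb_xy_bound:
  "degree a \<le> N \<Longrightarrow> lincomb_xy F a = (\<Sum>j\<le>N. lincomb_x (\<lambda>n. F n j) (coeff a j))"
  unfolding lincomb_xy_def by (rule sum.mono_neutral_left) (auto simp: coeff_eq_0)

lemma flinear_lincomb_xy: "flinear (lincomb_xy F)"
  unfolding flinear_def
proof (intro conjI allI)
  fix a b :: "'a poly poly"
  define N where "N = max (degree a) (degree b)"
  have "degree (a + b) \<le> N" "degree a \<le> N" "degree b \<le> N"
    using degree_add_le_max[of a b] by (auto simp: N_def)
  then show "lincomb_xy F (a + b) = lincomb_xy F a + lincomb_xy F b"
    by (simp add: lincomb_xy_bound[of _ N] sum.distrib lincomb_x.add)
next
  fix c and a :: "'a poly poly"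
  have "lincomb_xy F (ascal c a) = (\<Sum>j\<le>degree a. lincomb_x (\<lambda>n. F n j) (coeff (ascal c a) j))"
    by (rule lincomb_xy_bound) (simp add: ascal_def degree_smult_le)
  also have "\<dots> = ascal c (lincomb_xy F a)"
    by (simp add: lincomb_x_smult ascal_sum_right lincomb_xy_def)
  finally show "lincomb_xy F (ascal c a) = ascal c (lincomb_xy F a)" .
qed

lemma lincomb_xy_xy_monom: "lincomb_xy F (xy_monom n j) = F n j"
proof -
  have "lincomb_xy F (xy_monom n j) = (\<Sum>i\<le>j. lincomb_x (\<lambda>n. F n i) (coeff (xy_monom n j) i))"
    by (rule lincomb_xy_bound) (simp add: xy_monom_def degree_monom_le)
  also have "\<dots> = lincomb_x (\<lambda>n. F n j) (monom 1 n)"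
    by (subst sum.remove[of _ j]) (auto simp: xy_monom_def)
  finally show ?thesis by (simp add: lincomb_x_monom)
qed

lemma lincomb_xy_xy_monom_id: "lincomb_xy xy_monom a = a"
proof -
  have "lincomb_x (\<lambda>n. xy_monom n j) p = monom p j" for p :: "'a poly" and j
  proof -
    have "lincomb_x (\<lambda>n. xy_monom n j) p = (\<Sum>n\<le>degree p. monom (monom (coeff p n) n) j)"
      unfolding lincomb_x_def
      by (rule sum.cong) (simp_all only: ascal_def xy_monom_def smult_monom const_mult_monom_1)
    also have "\<dots> = monom p j"
      by (simp only: monom_sum[symmetric] poly_as_sum_of_monoms)
    finally show ?thesis .
  qed
  then show ?thesis
    unfolding lincomb_xy_def by (simp only: poly_as_sum_of_monoms)
qed

lemma flinear_lincomb_xy_comm: "flinear f \<Longrightarrow> f (lincomb_xy F a) = lincomb_xy (\<lambda>n j. f (F n j)) a"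
  by (simp add: lincomb_xy_def flinear_sum flinear_lincomb_x)

lemma flinear_eq_lincomb_xy: "flinear f \<Longrightarrow> f a = lincomb_xy (\<lambda>n j. f (xy_monom n j)) a"
  using flinear_lincomb_xy_comm[of f xy_monom a] by (simp add: lincomb_xy_xy_monom_id)

lemma flinear_eqI:
  assumes "flinear f" "flinear g" "\<And>n j. f (xy_monom n j) = g (xy_monom n j)"
  shows "f a = g a"
proof -
  have "f a = lincomb_xy (\<lambda>n j. f (xy_monom n j)) a"
    by (rule flinear_eq_lincomb_xy[OF assms(1)])
  also have "\<dots> = lincomb_xy (\<lambda>n j. g (xy_monom n j)) a"
    using assms(3) by simp
  also have "\<dots> = g a"
    by (rule flinear_eq_lincomb_xy[OF assms(2), symmetric])
  finally show ?thesis .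
qed

definition hoch_cob :: "'a::field poly \<Rightarrow> ('a poly poly \<Rightarrow> 'a poly poly) \<Rightarrow>
    'a poly poly \<Rightarrow> 'a poly poly \<Rightarrow> 'a poly poly" where
  "hoch_cob h f a b = amult h a (f b) - f (amult h a b) + amult h (f a) b"

definition hoch_d2 :: "'a::field poly \<Rightarrow> ('a poly poly \<Rightarrow> 'a poly poly \<Rightarrow> 'a poly poly) \<Rightarrow>
    'a poly poly \<Rightarrow> 'a poly poly \<Rightarrow> 'a poly poly \<Rightarrow> 'a poly poly" where
  "hoch_d2 h c a b e = amult h a (c b e) - c (amult h a b) e + c a (amult h b e) - amult h (c a b) e"

lemma hoch_coboundary2_iff: "hoch_coboundary2 h c \<longleftrightarrow> (\<exists>f. flinear f \<and> c = hoch_cob h f)"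
  by (simp add: hoch_coboundary2_def hoch_cob_def[abs_def])

lemma hoch_cocycle2_iff: "hoch_cocycle2 h c \<longleftrightarrow> fbilinear c \<and> (\<forall>a b e. hoch_d2 h c a b e = 0)"
  by (simp add: hoch_cocycle2_def hoch_d2_def)

lemma hoch_d2_hoch_cob [simp]: "hoch_d2 h (hoch_cob h f) a b e = 0"
  by (simp add: hoch_d2_def hoch_cob_def amult_left.diff amult_right.diff amult_left.add
      amult_right.add amult_assoc algebra_simps)

lemma hoch_d2_diff: "hoch_d2 h (\<lambda>a b. c a b - c' a b) a b e = hoch_d2 h c a b e - hoch_d2 h c' a b e"
  by (simp add: hoch_d2_def amult_left.diff amult_right.diff algebra_simps)

lemma hoch_d2_closed:
  "amult h a (hoch_d2 h c a' b e) - hoch_d2 h c (amult h a a') b e + hoch_d2 h c a (amult h a' b) e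
    - hoch_d2 h c a a' (amult h b e) + amult h (hoch_d2 h c a a' b) e = 0"
  by (simp add: hoch_d2_def amult_left.diff amult_right.diff amult_left.add amult_right.add
      amult_assoc)

lemma hoch_cob_add: "hoch_cob h (\<lambda>z. f z + f' z) a b = hoch_cob h f a b + hoch_cob h f' a b"
  by (simp add: hoch_cob_def amult_left.add amult_right.add algebra_simps)

lemma fbilinear_hoch_cob: "flinear f \<Longrightarrow> fbilinear (hoch_cob h f)"
  unfolding fbilinear_def hoch_cob_def
  by (intro conjI allI flinear_add_fun flinear_diff_fun flinear_amult_left flinear_amult_right
      flinear_comp[OF flinear_amult_right] flinear_comp[OF flinear_amult_left]
      flinear_comp[of f, OF _ flinear_amult_right] flinear_comp[of f, OF _ flinear_amult_left])

lemma fbilinear_add_left: "fbilinear c \<Longrightarrow> c (a + a') b = c a b + c a' b"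
  by (simp add: fbilinear_def flinear_def)

lemma fbilinear_add_right: "fbilinear c \<Longrightarrow> c a (b + b') = c a b + c a b'"
  by (simp add: fbilinear_def flinear_def)

lemma fbilinear_diff: "fbilinear c \<Longrightarrow> fbilinear c' \<Longrightarrow> fbilinear (\<lambda>a b. c a b - c' a b)"
  by (simp add: fbilinear_def flinear_diff_fun)

lemma hoch_cocycle2_hoch_cob: "flinear f \<Longrightarrow> hoch_cocycle2 h (hoch_cob h f)"
  by (simp add: hoch_cocycle2_iff fbilinear_hoch_cob)

lemma hoch_cocycle2_diff:
  "hoch_cocycle2 h c \<Longrightarrow> hoch_cocycle2 h c' \<Longrightarrow> hoch_cocycle2 h (\<lambda>a b. c a b - c' a b)"
  by (simp add: hoch_cocycle2_iff fbilinear_diff hoch_d2_diff)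

lemma hoch_cocycle2_unit:
  assumes "hoch_cocycle2 h c"
  shows "c 1 e = amult h (c 1 1) e" "c a 1 = amult h a (c 1 1)"
proof -
  have d2: "hoch_d2 h c a b e = 0" for a b e
    using assms by (simp add: hoch_cocycle2_iff)
  show "c 1 e = amult h (c 1 1) e"
    using d2[of 1 1 e] by (simp add: hoch_d2_def)
  show "c a 1 = amult h a (c 1 1)"
    using d2[of a 1 1] by (simp add: hoch_d2_def)
qed

section \<open>The obstruction of a 2-cocycle\<close>

text \<open>\<open>hdiff h u = \<delta>(h)\<close> for the derivation \<open>\<delta> : F[x] \<rightarrow> A\<close> with \<open>\<delta> x = u\<close>.\<close>

definition hdiff :: "'a::field poly \<Rightarrow> 'a poly poly \<Rightarrow> 'a poly poly" where
  "hdiff h u = (\<Sum>n\<le>degree h. \<Sum>i<n. smult (monom (coeff h n) (n - 1 - i)) (amult h u (x_pow i)))"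

text \<open>The derivation of the free algebra with \<open>x \<mapsto> u\<close>, \<open>y \<mapsto> v\<close>, evaluated on the defining
  relation \<open>y x - x y - h\<close>; the obstruction is the analogous evaluation of a 2-cocycle.\<close>

definition relation_der :: "'a::field poly \<Rightarrow> 'a poly poly \<Rightarrow> 'a poly poly \<Rightarrow> 'a poly poly" where
  "relation_der h u v =
    amult h gen_y u - amult h u gen_y + amult h v gen_x - amult h gen_x v - hdiff h u"

definition obstruction ::
    "'a::field poly \<Rightarrow> ('a poly poly \<Rightarrow> 'a poly poly \<Rightarrow> 'a poly poly) \<Rightarrow> 'a poly poly" where
  "obstruction h c = c gen_y gen_x - c gen_x gen_y -
     (\<Sum>n\<le>degree h. \<Sum>i<n. smult (monom (coeff h n) (n - 1 - i)) (c gen_x (x_pow i)))"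

lemma obstruction_add: "obstruction h (\<lambda>a b. c a b + c' a b) = obstruction h c + obstruction h c'"
  by (simp add: obstruction_def smult_add_right sum.distrib algebra_simps)

lemma obstruction_diff: "obstruction h (\<lambda>a b. c a b - c' a b) = obstruction h c - obstruction h c'"
  by (simp add: obstruction_def smult_diff_right sum_subtractf algebra_simps)

lemma obstruction_ascal: "obstruction h (\<lambda>a b. ascal k (c a b)) = ascal k (obstruction h c)"
  by (simp add: obstruction_def ascal_def smult_diff_right smult_sum_right smult_smult mult.commute)

lemma obstruction_sum: "obstruction h (\<lambda>a b. \<Sum>i\<in>S. c i a b) = (\<Sum>i\<in>S. obstruction h (c i))"
proof (induction S rule: infinite_finite_induct)
  case (insert i S)
  then show ?case
    using obstruction_add[of h "c i" "\<lambda>a b. \<Sum>i\<in>S. c i a b"] by simp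
qed (simp_all add: obstruction_def)

lemma obstruction_hoch_cob_sum:
  assumes "flinear f"
  shows "(\<Sum>i<n. smult (monom a (n - 1 - i)) (hoch_cob h f gen_x (x_pow i))) =
    smult (monom a n) (f 1) - ascal a (f (x_pow n)) +
    (\<Sum>i<n. smult (monom a (n - 1 - i)) (amult h (f gen_x) (x_pow i)))"
proof -
  define t where "t i = smult (monom a (n - i)) (f (x_pow i))" for i
  have "(\<Sum>i<n. smult (monom a (n - 1 - i)) (hoch_cob h f gen_x (x_pow i))) =
      (\<Sum>i<n. t i - t (Suc i)) + (\<Sum>i<n. smult (monom a (n - 1 - i)) (amult h (f gen_x) (x_pow i)))"
    unfolding sum.distrib[symmetric]
  proof (rule sum.cong)
    fix i assume "i \<in> {..<n}"
    then have "n - i = Suc (n - 1 - i)"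
      by auto
    then have "smult (monom a (n - 1 - i)) (smult [:0, 1:] (f (x_pow i))) = t i"
      by (simp add: t_def smult_smult monom_Suc)
    then show "smult (monom a (n - 1 - i)) (hoch_cob h f gen_x (x_pow i)) =
        t i - t (Suc i) + smult (monom a (n - 1 - i)) (amult h (f gen_x) (x_pow i))"
      unfolding hoch_cob_def amult_gen_x_x_pow
      by (simp add: amult_gen_x_left t_def smult_add_right smult_diff_right)
  qed simp
  also have "(\<Sum>i<n. t i - t (Suc i)) = t 0 - t n"
    by (rule sum_lessThan_telescope')
  also have "t 0 - t n = smult (monom a n) (f 1) - ascal a (f (x_pow n))"
    by (simp add: t_def x_pow_0 ascal_def monom_0)
  finally show ?thesis .
qed

lemma obstruction_hoch_cob:
  assumes f: "flinear f"
  shows "obstruction h (hoch_cob h f) = relation_der h (f gen_x) (f gen_y) - smult h (f 1)"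
proof -
  have "f [:h:] = lincomb_x (\<lambda>n. f (x_pow n)) h"
    by (simp add: flinear_lincomb_x[OF f] flip: lincomb_x_x_pow)
  then have f_h: "f [:h:] = (\<Sum>n\<le>degree h. ascal (coeff h n) (f (x_pow n)))"
    by (simp add: lincomb_x_def)
  have smult_h: "smult h (f 1) = (\<Sum>n\<le>degree h. smult (monom (coeff h n) n) (f 1))"
    by (subst (1) poly_as_sum_of_monoms[symmetric]) (simp only: smult_sum)
  have sum_eq:
    "(\<Sum>n\<le>degree h. \<Sum>i<n. smult (monom (coeff h n) (n - 1 - i)) (hoch_cob h f gen_x (x_pow i)))
      = smult h (f 1) - f [:h:] + hdiff h (f gen_x)"
    by (simp only: obstruction_hoch_cob_sum[OF f] sum.distrib sum_subtractf hdiff_def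
        flip: f_h smult_h)
  have commutator_eq: "hoch_cob h f gen_y gen_x - hoch_cob h f gen_x gen_y =
      amult h gen_y (f gen_x) - amult h (f gen_x) gen_y + amult h (f gen_y) gen_x
      - amult h gen_x (f gen_y) - f [:h:]"
    by (simp add: hoch_cob_def amult_gen_y_gen_x flinear_add[OF f])
  show ?thesis
    unfolding obstruction_def sum_eq commutator_eq relation_der_def by (simp add: algebra_simps)
qed

text \<open>A normalized cocycle with obstruction \<open>- relation_der h u v\<close> is \<open>hoch_cob h (- \<phi>)\<close>, where
  on the basis \<open>\<phi>(x\<^sup>n) = \<Sum>\<^sub>i<\<^sub>n x\<^sup>n\<^sup>-\<^sup>1\<^sup>-\<^sup>i (u x\<^sup>i + c(x, x\<^sup>i))\<close> and
  \<open>\<phi>(x\<^sup>n y\<^sup>j\<^sup>+\<^sup>1) = \<phi>(x\<^sup>n y\<^sup>j) y + x\<^sup>n y\<^sup>j v + c(x\<^sup>n y\<^sup>j, y)\<close>. The defect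
  \<open>D = hoch_cob h (- \<phi>) - c\<close> is a cocycle vanishing on \<open>(a, y)\<close>, \<open>(x, x\<^sup>n)\<close> and, by the hypothesis
  on the obstruction, on \<open>(y, x)\<close>; the cocycle identity propagates this to all arguments.\<close>

locale obstruction_in_image =
  fixes h :: "'a::field poly" and c :: "'a poly poly \<Rightarrow> 'a poly poly \<Rightarrow> 'a poly poly"
    and u v :: "'a poly poly"
  assumes cocycle: "hoch_cocycle2 h c"
    and c_right_1: "\<And>a. c a 1 = 0"
    and c_left_1: "\<And>b. c 1 b = 0"
    and obstruction_eq: "obstruction h c + relation_der h u v = 0"
begin

definition phi_x_pow :: "nat \<Rightarrow> 'a poly poly" where
  "phi_x_pow n = (\<Sum>i<n. smult (monom 1 (n - 1 - i)) (amult h u (x_pow i) + c gen_x (x_pow i)))"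

primrec phi_basis :: "nat \<Rightarrow> nat \<Rightarrow> 'a poly poly" where
  "phi_basis n 0 = phi_x_pow n"
| "phi_basis n (Suc j) =
    amult h (phi_basis n j) gen_y + amult h (xy_monom n j) v + c (xy_monom n j) gen_y"

definition phi :: "'a poly poly \<Rightarrow> 'a poly poly" where
  "phi = lincomb_xy phi_basis"

definition defect :: "'a poly poly \<Rightarrow> 'a poly poly \<Rightarrow> 'a poly poly" where
  "defect a b = hoch_cob h (\<lambda>z. - phi z) a b - c a b"

lemma flinear_phi: "flinear phi"
  by (simp add: phi_def flinear_lincomb_xy)

lemma phi_xy_monom: "phi (xy_monom n j) = phi_basis n j"
  by (simp add: phi_def lincomb_xy_xy_monom)

lemma phi_x_pow: "phi (x_pow n) = phi_x_pow n"
  by (simp add: phi_xy_monom flip: xy_monom_0)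

lemma phi_1: "phi 1 = 0"
  by (simp add: phi_x_pow phi_x_pow_def flip: x_pow_0)

lemma phi_x_pow_1: "phi_x_pow (Suc 0) = u"
  by (simp add: phi_x_pow_def x_pow_0 c_right_1 monom_0)

lemma phi_gen_x: "phi gen_x = u"
  by (simp add: phi_x_pow phi_x_pow_1 flip: x_pow_1)

lemma phi_gen_y: "phi gen_y = v"
proof -
  have y: "gen_y = xy_monom 0 1"
    by (simp add: xy_monom_def gen_y_eq(1))
  show ?thesis
    unfolding y by (simp add: phi_xy_monom phi_x_pow_def xy_monom_0 x_pow_0 c_left_1)
qed

lemma phi_x_pow_Suc:
  "phi_x_pow (Suc n) = amult h gen_x (phi_x_pow n) + (amult h u (x_pow n) + c gen_x (x_pow n))"
proof -
  have "phi_x_pow (Suc n) = (\<Sum>i<n. smult (monom 1 (n - i)) (amult h u (x_pow i) + c gen_x (x_pow i)))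
      + (amult h u (x_pow n) + c gen_x (x_pow n))"
    unfolding phi_x_pow_def by (simp add: monom_0)
  also have "(\<Sum>i<n. smult (monom 1 (n - i)) (amult h u (x_pow i) + c gen_x (x_pow i)))
      = amult h gen_x (phi_x_pow n)"
    unfolding amult_gen_x_left phi_x_pow_def smult_sum_right
  proof (rule sum.cong)
    fix i assume "i \<in> {..<n}"
    then have "n - i = Suc (n - 1 - i)"
      by simp
    then have "monom 1 (n - i) = [:0, 1:] * monom (1::'a) (n - 1 - i)"
      by (simp add: monom_Suc)
    then show "smult (monom 1 (n - i)) (amult h u (x_pow i) + c gen_x (x_pow i)) =
        smult [:0, 1:] (smult (monom 1 (n - 1 - i)) (amult h u (x_pow i) + c gen_x (x_pow i)))"
      by (simp only: smult_smult)
  qed simp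
  finally show ?thesis .
qed

lemma phi_const_h:
  "phi [:h:] = hdiff h u +
    (\<Sum>n\<le>degree h. \<Sum>i<n. smult (monom (coeff h n) (n - 1 - i)) (c gen_x (x_pow i)))"
proof -
  have "phi [:h:] = lincomb_x phi_x_pow h"
    by (simp add: flinear_lincomb_x[OF flinear_phi] phi_x_pow flip: lincomb_x_x_pow)
  also have "\<dots> = (\<Sum>n\<le>degree h. (\<Sum>i<n. smult (monom (coeff h n) (n - 1 - i)) (amult h u (x_pow i))) +
        (\<Sum>i<n. smult (monom (coeff h n) (n - 1 - i)) (c gen_x (x_pow i))))"
    unfolding lincomb_x_def
    by (rule sum.cong) (simp_all add: ascal_def phi_x_pow_def smult_sum_right smult_add_right
        sum.distrib smult_monom const_mult_monom_1)
  finally show ?thesis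
    by (simp add: sum.distrib hdiff_def)
qed

lemma defect_eq: "defect a b = phi (amult h a b) - amult h a (phi b) - amult h (phi a) b - c a b"
  by (simp add: defect_def hoch_cob_def amult_left.minus amult_right.minus)

lemma fbilinear_defect: "fbilinear defect"
proof -
  have "fbilinear c"
    using cocycle by (simp add: hoch_cocycle2_iff)
  then show ?thesis
    unfolding defect_def[abs_def]
    by (intro fbilinear_diff fbilinear_hoch_cob flinear_minus_fun flinear_phi)
qed

lemma flinear_defect_left: "flinear (\<lambda>a. defect a b)"
  using fbilinear_defect by (simp add: fbilinear_def)

lemma flinear_defect_right: "flinear (defect a)"
  using fbilinear_defect by (simp add: fbilinear_def)

lemma hoch_d2_defect: "hoch_d2 h defect a b e = 0"
proof -
  have "hoch_cocycle2 h (\<lambda>a b. hoch_cob h (\<lambda>z. - phi z) a b - c a b)"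
    by (intro hoch_cocycle2_diff hoch_cocycle2_hoch_cob flinear_minus_fun flinear_phi cocycle)
  then show ?thesis
    by (simp add: hoch_cocycle2_iff defect_def[abs_def])
qed

lemma defect_cocycle_eq:
  "amult h a (defect b e) - defect (amult h a b) e + defect a (amult h b e) -
    amult h (defect a b) e = 0"
  using hoch_d2_defect by (simp add: hoch_d2_def)

lemma defect_gen_y_right: "defect a gen_y = 0"
proof -
  have "defect (xy_monom n j) gen_y = 0" for n j
    by (simp add: defect_eq amult_xy_monom_gen_y phi_xy_monom phi_gen_y)
  then show ?thesis
    using flinear_eqI[OF flinear_defect_left, of "\<lambda>_. 0"] by (simp add: flinear_def)
qed

lemma defect_1_right: "defect a 1 = 0"
  by (simp add: defect_eq phi_1 c_right_1)

lemma defect_1_left: "defect 1 e = 0"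
  using defect_cocycle_eq[of 1 1 e] by (simp add: defect_1_right)

lemma defect_amult_gen_y_right: "defect a (amult h b gen_y) = amult h (defect a b) gen_y"
  using defect_cocycle_eq[of a b gen_y] by (simp add: defect_gen_y_right)

lemma defect_gen_x_x_pow: "defect gen_x (x_pow n) = 0"
  by (simp add: defect_eq amult_gen_x_x_pow phi_x_pow phi_gen_x phi_x_pow_Suc)

lemma defect_x_pow_gen_x: "defect (x_pow i) gen_x = 0"
proof (induction i)
  case 0
  then show ?case by (simp add: x_pow_0 defect_1_left)
next
  case (Suc i)
  have "amult h (x_pow i) gen_x = x_pow (Suc i)"
    by (simp add: amult_x_pow_x_pow flip: x_pow_1)
  then show ?case
    using defect_cocycle_eq[of gen_x "x_pow i" gen_x] Suc
    by (simp add: defect_gen_x_x_pow amult_gen_x_x_pow)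
qed

lemma defect_gen_y_gen_x: "defect gen_y gen_x = 0"
proof -
  have "phi (xy_monom 1 1) = amult h u gen_y + amult h gen_x v + c gen_x gen_y"
    by (simp add: phi_xy_monom phi_x_pow_1 xy_monom_0 x_pow_1)
  then have "defect gen_y gen_x = - (obstruction h c + relation_der h u v)"
    by (simp add: defect_eq amult_gen_y_gen_x amult_gen_x_gen_y flinear_add[OF flinear_phi]
        phi_const_h phi_gen_x phi_gen_y obstruction_def relation_der_def algebra_simps)
  then show ?thesis
    using obstruction_eq by simp
qed

lemma defect_const_gen_x: "defect [:r:] gen_x = 0"
  by (simp add: flinear_lincomb_x[OF flinear_defect_left] defect_x_pow_gen_x flip: lincomb_x_x_pow)

lemma defect_const_right:
  assumes "\<And>a'. degree a' \<le> degree b \<Longrightarrow> defect a' gen_x = 0"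
  shows "defect b [:r:] = 0"
proof -
  have "defect b (x_pow n) = 0" for n
  proof (induction n)
    case 0
    then show ?case by (simp add: x_pow_0 defect_1_right)
  next
    case (Suc n)
    have "degree (amult h b (x_pow n)) \<le> degree b"
      using degree_amult[of h b "x_pow n"] by (simp add: x_pow_def)
    then have "defect (amult h b (x_pow n)) gen_x = 0"
      by (rule assms)
    moreover have "amult h (x_pow n) gen_x = x_pow (Suc n)"
      by (simp add: amult_x_pow_x_pow flip: x_pow_1)
    ultimately show ?case
      using defect_cocycle_eq[of b "x_pow n" gen_x] Suc by (simp add: defect_x_pow_gen_x)
  qed
  then show ?thesis
    by (simp add: flinear_lincomb_x[OF flinear_defect_right] flip: lincomb_x_x_pow)
qed

lemma defect_gen_x_right: "defect a gen_x = 0"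
proof (induction "degree a" arbitrary: a rule: less_induct)
  case less
  obtain c0 b where a: "a = pCons c0 b"
    by (rule pCons_cases)
  show ?case
  proof (cases "b = 0")
    case True
    then show ?thesis
      using a defect_const_gen_x by simp
  next
    case False
    then have "degree b < degree a"
      using a by simp
    then have IH: "defect a' gen_x = 0" if "degree a' \<le> degree b" for a'
      using less that by simp
    have "defect (amult h b gen_y) gen_x = defect b (amult h gen_y gen_x)"
      using defect_cocycle_eq[of b gen_y gen_x] by (simp add: defect_gen_y_gen_x defect_gen_y_right)
    also have "\<dots> = 0"
      by (simp add: amult_gen_y_gen_x flinear_add[OF flinear_defect_right] defect_amult_gen_y_right
          defect_const_right IH IH[OF order.refl])
    finally show ?thesis
      by (simp add: a pCons_eq_const_plus_amult_gen_y[of c0 b h] flinear_add[OF flinear_defect_left]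
          defect_const_gen_x)
  qed
qed

lemma defect_eq_0: "defect a b = 0"
proof (induction b rule: pCons_induct)
  case 0
  then show ?case by (simp add: flinear_zero[OF flinear_defect_right])
next
  case (pCons c0 b)
  have "defect a [:c0:] = 0"
    by (rule defect_const_right) (rule defect_gen_x_right)
  then show ?case
    using pCons.IH by (simp add: pCons_eq_const_plus_amult_gen_y[of c0 b h]
        flinear_add[OF flinear_defect_right] defect_amult_gen_y_right)
qed

theorem coboundary: "hoch_coboundary2 h c"
proof -
  have "c = hoch_cob h (\<lambda>z. - phi z)"
    using defect_eq_0 by (intro ext) (simp add: defect_def)
  then show ?thesis
    using flinear_minus_fun[OF flinear_phi] by (auto simp: hoch_coboundary2_iff)
qed

end

section \<open>Cocycles with prescribed obstruction\<close>

text \<open>\<open>xder h w\<close> is the derivation \<open>\<delta> : F[x] \<rightarrow> A\<close> with \<open>\<delta> x = w\<close>, so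
  \<open>\<delta>(x\<^sup>k) = \<Sum>\<^sub>i<\<^sub>k x\<^sup>i w x\<^sup>k\<^sup>-\<^sup>1\<^sup>-\<^sup>i\<close>; \<open>xder_lift h w\<close> extends it to \<open>A\<close> by
  \<open>p y\<^sup>m \<mapsto> \<delta>(p) y\<^sup>m\<close>.\<close>

definition xder_pow :: "'a::field poly \<Rightarrow> 'a poly poly \<Rightarrow> nat \<Rightarrow> 'a poly poly" where
  "xder_pow h w k = (\<Sum>i<k. smult (monom 1 i) (amult h w (x_pow (k - 1 - i))))"

definition xder :: "'a::field poly \<Rightarrow> 'a poly poly \<Rightarrow> 'a poly \<Rightarrow> 'a poly poly" where
  "xder h w = lincomb_x (xder_pow h w)"

definition xder_lift :: "'a::field poly \<Rightarrow> 'a poly poly \<Rightarrow> 'a poly poly \<Rightarrow> 'a poly poly" where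
  "xder_lift h w z = (\<Sum>m\<le>degree z. amult h (xder h w (coeff z m)) (monom 1 m))"

lemma xder_pow_Suc: "xder_pow h w (Suc k) = amult h w (x_pow k) + smult [:0, 1:] (xder_pow h w k)"
proof -
  have "xder_pow h w (Suc k) = smult (monom 1 0) (amult h w (x_pow (Suc k - 1 - 0))) +
      (\<Sum>i<k. smult (monom 1 (Suc i)) (amult h w (x_pow (Suc k - 1 - Suc i))))"
    unfolding xder_pow_def by (rule sum.lessThan_Suc_shift)
  also have "(\<Sum>i<k. smult (monom 1 (Suc i)) (amult h w (x_pow (Suc k - 1 - Suc i)))) =
      smult [:0, 1:] (xder_pow h w k)"
    unfolding xder_pow_def smult_sum_right
    by (rule sum.cong) (simp_all add: smult_smult monom_Suc)
  finally show ?thesis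
    by (simp add: monom_0)
qed

lemma xder_add: "xder h w (p + q) = xder h w p + xder h w q"
  by (simp add: xder_def lincomb_x.add)

lemma xder_0 [simp]: "xder h w 0 = 0"
  by (simp add: xder_def)

lemma xder_smult: "xder h w (smult k p) = ascal k (xder h w p)"
  by (simp add: xder_def lincomb_x_smult)

lemma xder_const: "xder h w [:k:] = 0"
  using lincomb_x_monom[of "xder_pow h w" k 0] by (simp add: xder_def xder_pow_def monom_0)

lemma xder_X: "xder h w [:0, 1:] = w"
  using lincomb_x_monom[of "xder_pow h w" 1 1]
  by (simp add: xder_def xder_pow_def monom_Suc monom_0 x_pow_0)

lemma xder_pCons_0: "xder h w (pCons 0 q) = amult h w [:q:] + smult [:0, 1:] (xder h w q)"
proof -
  have "lincomb_x (\<lambda>k. amult h w (x_pow k)) q = amult h w [:q:]"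
    by (simp add: flinear_lincomb_x[OF flinear_amult_right] flip: lincomb_x_x_pow)
  then show ?thesis
    by (simp add: xder_def lincomb_x_pCons_0 xder_pow_Suc lincomb_x_fun_add lincomb_x_fun_smult)
qed

lemma xder_mult: "xder h w (p * q) = amult h (xder h w p) [:q:] + smult p (xder h w q)"
proof (induction p rule: pCons_induct)
  case 0
  then show ?case by (simp add: xder_def)
next
  case (pCons a p)
  have "xder h w (pCons a p * q) = smult [:a:] (xder h w q) + amult h w [:p * q:] +
      smult [:0, 1:] (amult h (xder h w p) [:q:] + smult p (xder h w q))"
    by (simp only: mult_pCons_left xder_add xder_smult xder_pCons_0 pCons.IH ascal_def add.assoc)
  also have "amult h w [:p * q:] = amult h (amult h w [:p:]) [:q:]"
    by (simp add: amult_const_left mult.commute flip: amult_assoc)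
  also have "smult [:a:] (xder h w q) + amult h (amult h w [:p:]) [:q:] +
      smult [:0, 1:] (amult h (xder h w p) [:q:] + smult p (xder h w q)) =
      amult h (amult h w [:p:] + smult [:0, 1:] (xder h w p)) [:q:] +
      smult ([:a:] + [:0, 1:] * p) (xder h w q)"
    by (simp only: amult_left.add amult_smult_left smult_add_right smult_add_left smult_smult add_ac)
  also have "amult h w [:p:] + smult [:0, 1:] (xder h w p) = xder h w (pCons a p)"
    using xder_pCons_0[of h w p] xder_add[of h w "[:a:]" "pCons 0 p"] by (simp add: xder_const)
  also have "[:a:] + [:0, 1:] * p = pCons a p"
    by simp
  finally show ?case .
qed

lemma xder_lift_bound:
  "degree z \<le> N \<Longrightarrow> xder_lift h w z = (\<Sum>m\<le>N. amult h (xder h w (coeff z m)) (monom 1 m))"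
  unfolding xder_lift_def by (rule sum.mono_neutral_left) (auto simp: coeff_eq_0 xder_def)

interpretation xder_lift: additive "xder_lift h w"
proof
  fix a b :: "'a poly poly"
  define N where "N = max (degree a) (degree b)"
  have "degree (a + b) \<le> N" "degree a \<le> N" "degree b \<le> N"
    using degree_add_le_max[of a b] by (auto simp: N_def)
  then show "xder_lift h w (a + b) = xder_lift h w a + xder_lift h w b"
    by (simp add: xder_lift_bound[of _ N] sum.distrib xder_add amult_left.add)
qed

lemma xder_lift_smult: "xder_lift h w (smult p z) = amult h (xder h w p) z + smult p (xder_lift h w z)"
proof -
  have "xder_lift h w (smult p z) = (\<Sum>m\<le>degree z. amult h (xder h w (p * coeff z m)) (monom 1 m))"
    by (subst xder_lift_bound[of _ "degree z"]) (simp_all add: degree_smult_le)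
  also have "\<dots> = (\<Sum>m\<le>degree z. amult h (xder h w p) (monom (coeff z m) m) +
      smult p (amult h (xder h w (coeff z m)) (monom 1 m)))"
  proof (rule sum.cong)
    fix m
    have "amult h [:coeff z m:] (monom 1 m) = monom (coeff z m) m"
      by (simp add: amult_const_left smult_monom)
    then show "amult h (xder h w (p * coeff z m)) (monom 1 m) =
        amult h (xder h w p) (monom (coeff z m) m) +
        smult p (amult h (xder h w (coeff z m)) (monom 1 m))"
      by (simp add: xder_mult amult_left.add amult_smult_left flip: amult_assoc)
  qed simp
  also have "\<dots> = amult h (xder h w p) z + smult p (xder_lift h w z)"
    by (simp add: sum.distrib xder_lift_def smult_sum_right poly_as_sum_of_monoms
        flip: amult_right.sum)
  finally show ?thesis .
qed

lemma xder_lift_smult_const: "xder_lift h w (smult [:k:] z) = smult [:k:] (xder_lift h w z)"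
  by (simp add: xder_lift_smult xder_const)

lemma xder_lift_monom: "xder_lift h w (monom p m) = amult h (xder h w p) (monom 1 m)"
  by (simp add: xder_lift_bound[OF degree_monom_le] sum.remove[of _ m])

lemma xder_lift_gen_x: "xder_lift h w gen_x = w"
  using xder_lift_monom[of h w "[:0, 1:]" 0] xder_X[of h w] by (simp add: gen_x_def monom_0 pCons_one)

definition cocycle_term :: "'a::field poly \<Rightarrow> 'a poly poly \<Rightarrow> nat \<Rightarrow> 'a poly poly \<Rightarrow> 'a poly poly" where
  "cocycle_term h w j b = (\<Sum>i<j. (ymult h ^^ (j - 1 - i)) (xder_lift h w ((ymult h ^^ i) b)))"

definition cocycle_of ::
    "'a::field poly \<Rightarrow> 'a poly poly \<Rightarrow> 'a poly poly \<Rightarrow> 'a poly poly \<Rightarrow> 'a poly poly" where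
  "cocycle_of h w a b = coeff_comb (\<lambda>j. cocycle_term h w j b) a"

lemma cocycle_term_Suc:
  "cocycle_term h w (Suc j) b = ymult h (cocycle_term h w j b) + xder_lift h w ((ymult h ^^ j) b)"
proof -
  have "cocycle_term h w (Suc j) b =
      (\<Sum>i<j. (ymult h ^^ (j - i)) (xder_lift h w ((ymult h ^^ i) b))) +
      xder_lift h w ((ymult h ^^ j) b)"
    unfolding cocycle_term_def by simp
  also have "(\<Sum>i<j. (ymult h ^^ (j - i)) (xder_lift h w ((ymult h ^^ i) b))) =
      ymult h (cocycle_term h w j b)"
    unfolding cocycle_term_def ymult.sum
  proof (rule sum.cong)
    fix i assume "i \<in> {..<j}"
    then have "j - i = Suc (j - 1 - i)"
      by auto
    then show "(ymult h ^^ (j - i)) (xder_lift h w ((ymult h ^^ i) b)) =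
        ymult h ((ymult h ^^ (j - 1 - i)) (xder_lift h w ((ymult h ^^ i) b)))"
      by simp
  qed simp
  finally show ?thesis .
qed

interpretation cocycle_term: additive "cocycle_term h w j"
  by unfold_locales (simp add: cocycle_term_def ymult_pow.add xder_lift.add sum.distrib)

lemma cocycle_term_smult_const:
  "cocycle_term h w j (smult [:k:] b) = smult [:k:] (cocycle_term h w j b)"
  by (simp add: cocycle_term_def funpow_ymult_smult_const xder_lift_smult_const smult_sum_right)

interpretation cocycle_of_left: additive "\<lambda>a. cocycle_of h w a b"
  by unfold_locales (simp add: cocycle_of_def coeff_comb.add)

interpretation cocycle_of_right: additive "cocycle_of h w a"
  by unfold_locales (simp add: cocycle_of_def cocycle_term.add coeff_comb_fun_add)

lemma cocycle_of_smult_left: "cocycle_of h w (smult p a) b = smult p (cocycle_of h w a b)"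
  by (simp add: cocycle_of_def coeff_comb_smult)

lemma cocycle_of_monom: "cocycle_of h w (monom p k) b = smult p (cocycle_term h w k b)"
  by (simp add: cocycle_of_def coeff_comb_monom)

lemma cocycle_of_smult_const_right:
  "cocycle_of h w a (smult [:k:] b) = smult [:k:] (cocycle_of h w a b)"
  by (simp add: cocycle_of_def cocycle_term_smult_const coeff_comb_fun_smult)

lemma cocycle_of_1 [simp]: "cocycle_of h w 1 b = 0"
  using cocycle_of_monom[of h w 1 0 b] by (simp add: monom_0 pCons_one cocycle_term_def)

lemma fbilinear_cocycle_of: "fbilinear (cocycle_of h w)"
  by (simp add: fbilinear_def flinear_def ascal_def cocycle_of_left.add cocycle_of_right.add
      cocycle_of_smult_left cocycle_of_smult_const_right)

lemma cocycle_of_gen_y: "cocycle_of h w gen_y b = xder_lift h w b"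
  by (simp add: gen_y_eq(1) cocycle_of_monom cocycle_term_Suc[of h w 0] cocycle_term_def)

lemma cocycle_of_gen_x: "cocycle_of h w gen_x b = 0"
  by (simp add: gen_x_def cocycle_of_def coeff_comb_const cocycle_term_def)

lemma obstruction_cocycle_of: "obstruction h (cocycle_of h w) = w"
  by (simp add: obstruction_def cocycle_of_gen_y cocycle_of_gen_x xder_lift_gen_x)

lemma hoch_d2_cocycle_of_gen_y_monom: "hoch_d2 h (cocycle_of h w) gen_y (monom p k) e = 0"
proof -
  have "amult h gen_y (cocycle_of h w (monom p k) e) =
      smult p (ymult h (cocycle_term h w k e)) + smult (hder h p) (cocycle_term h w k e)"
    by (simp add: amult_gen_y_left cocycle_of_monom ymult_smult)
  moreover have "cocycle_of h w (amult h gen_y (monom p k)) e =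
      smult p (ymult h (cocycle_term h w k e)) + smult p (xder_lift h w ((ymult h ^^ k) e)) +
      smult (hder h p) (cocycle_term h w k e)"
    by (simp add: amult_gen_y_left ymult_monom cocycle_of_left.add cocycle_of_monom cocycle_term_Suc
        smult_add_right)
  moreover have "cocycle_of h w gen_y (amult h (monom p k) e) =
      amult h (xder h w p) ((ymult h ^^ k) e) + smult p (xder_lift h w ((ymult h ^^ k) e))"
    by (simp add: cocycle_of_gen_y amult_monom_left xder_lift_smult)
  moreover have "amult h (cocycle_of h w gen_y (monom p k)) e =
      amult h (xder h w p) ((ymult h ^^ k) e)"
    by (simp add: cocycle_of_gen_y xder_lift_monom amult_monom_left flip: amult_assoc)
  ultimately show ?thesis
    by (simp add: hoch_d2_def)
qed

lemma additive_hoch_d2_left: "fbilinear c \<Longrightarrow> additive (\<lambda>a. hoch_d2 h c a b e)"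
  by unfold_locales (simp add: hoch_d2_def amult_left.add amult_right.add fbilinear_add_left)

lemma additive_hoch_d2_mid: "fbilinear c \<Longrightarrow> additive (\<lambda>b. hoch_d2 h c a b e)"
  by unfold_locales
    (simp add: hoch_d2_def amult_left.add amult_right.add fbilinear_add_left fbilinear_add_right)

lemma hoch_cocycle2_cocycle_of: "hoch_cocycle2 h (cocycle_of h w)"
proof -
  note d2_left = additive.sum[OF additive_hoch_d2_left[OF fbilinear_cocycle_of]]
  note d2_mid = additive.sum[OF additive_hoch_d2_mid[OF fbilinear_cocycle_of]]
  have gen_y: "hoch_d2 h (cocycle_of h w) gen_y b e = 0" for b e
    by (subst poly_as_sum_of_monoms[symmetric])
      (simp only: d2_mid hoch_d2_cocycle_of_gen_y_monom sum.neutral_const)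
  have y_pow: "hoch_d2 h (cocycle_of h w) (monom 1 j) b e = 0" for j b e
  proof (induction j arbitrary: b e)
    case 0
    then show ?case by (simp add: hoch_d2_def monom_0 pCons_one)
  next
    case (Suc j)
    have "monom 1 (Suc j) = amult h (monom 1 j) gen_y"
      by (simp add: amult_gen_y_right monom_Suc)
    then show ?case
      using hoch_d2_closed[of h "monom 1 j" "cocycle_of h w" gen_y b e] by (simp add: Suc gen_y)
  qed
  have "hoch_d2 h (cocycle_of h w) a b e = 0" for a b e
  proof -
    have "hoch_d2 h (cocycle_of h w) (smult p a) b e = smult p (hoch_d2 h (cocycle_of h w) a b e)"
      for p a
      by (simp add: hoch_d2_def amult_smult_left cocycle_of_smult_left smult_diff_right
          smult_add_right)
    then show ?thesis
      by (subst coeff_comb_monom_1[symmetric]) (simp add: coeff_comb_def d2_left y_pow)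
  qed
  then show ?thesis
    by (simp add: hoch_cocycle2_iff fbilinear_cocycle_of)
qed

section \<open>Reduction modulo \<open>gcd h h'\<close>\<close>

lemma in_ideal_iff: "in_ideal h g a \<longleftrightarrow> [:g:] dvd a"
  by (simp add: in_ideal_def amult_const_left dvd_def)

lemma funpow_ymult_mod:
  assumes "g dvd h"
  shows "[:g:] dvd ((ymult h ^^ j) z - monom 1 j * z)"
proof (induction j)
  case 0
  then show ?case by (simp add: monom_0 pCons_one)
next
  case (Suc j)
  have hder_dvd: "[:g:] dvd map_poly (hder h) p" for p
    using assms by (auto simp: const_poly_dvd_iff coeff_map_poly hder_def intro: dvd_mult2)
  have "(ymult h ^^ Suc j) z - monom 1 (Suc j) * z =
      [:0, 1:] * ((ymult h ^^ j) z - monom 1 j * z) + map_poly (hder h) ((ymult h ^^ j) z)"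
    by (simp add: ymult_def monom_Suc algebra_simps)
  also have "[:g:] dvd \<dots>"
    by (intro dvd_add dvd_mult Suc hder_dvd)
  finally show ?case .
qed

lemma amult_mod:
  assumes "g dvd h"
  shows "[:g:] dvd (amult h a b - a * b)"
proof -
  have "amult h a b - a * b = coeff_comb (\<lambda>j. (ymult h ^^ j) b - monom 1 j * b) a"
    by (simp only: amult_eq_coeff_comb mult_eq_coeff_comb[of a b] coeff_comb_fun_diff)
  also have "[:g:] dvd \<dots>"
    unfolding coeff_comb_def by (intro dvd_sum const_dvd_smult funpow_ymult_mod assms)
  finally show ?thesis .
qed

lemma pderiv_eq_sum:
  "pderiv h = (\<Sum>n\<le>degree h. \<Sum>i<n. monom (coeff h n) (n - 1 - i) * monom 1 i)"
proof -
  have "(\<Sum>i<n. monom (coeff h n) (n - 1 - i) * monom 1 i) = monom (of_nat n * coeff h n) (n - 1)" for n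
  proof -
    have "(\<Sum>i<n. monom (coeff h n) (n - 1 - i) * monom 1 i) = (\<Sum>i<n. monom (coeff h n) (n - 1))"
      by (rule sum.cong) (simp_all add: mult_monom)
    then show ?thesis
      by (simp only: monom_sum[symmetric] sum_constant card_lessThan)
  qed
  moreover have "pderiv h = (\<Sum>n\<le>degree h. monom (of_nat n * coeff h n) (n - 1))"
    by (subst (1) poly_as_sum_of_monoms[symmetric])
      (simp add: higher_pderiv_sum[of 1, simplified] pderiv_monom)
  ultimately show ?thesis
    by simp
qed

lemma hdiff_mod:
  assumes "g dvd h"
  shows "[:g:] dvd (hdiff h u - smult (pderiv h) u)"
proof -
  have "smult (pderiv h) u = (\<Sum>n\<le>degree h. \<Sum>i<n. smult (monom (coeff h n) (n - 1 - i)) (u * x_pow i))"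
    by (simp add: pderiv_eq_sum smult_sum x_pow_def mult.commute[of u] flip: smult_smult)
  then have "hdiff h u - smult (pderiv h) u =
      (\<Sum>n\<le>degree h. \<Sum>i<n. smult (monom (coeff h n) (n - 1 - i)) (amult h u (x_pow i) - u * x_pow i))"
    by (simp add: hdiff_def smult_diff_right sum_subtractf)
  also have "[:g:] dvd \<dots>"
    by (intro dvd_sum const_dvd_smult amult_mod assms)
  finally show ?thesis .
qed

lemma relation_der_mod:
  assumes "g dvd h" "g dvd pderiv h"
  shows "[:g:] dvd relation_der h u v"
proof -
  have "relation_der h u v = (amult h gen_y u - gen_y * u) - (amult h u gen_y - u * gen_y)
      + (amult h v gen_x - v * gen_x) - (amult h gen_x v - gen_x * v)
      - (hdiff h u - smult (pderiv h) u) - smult (pderiv h) u"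
    by (simp add: relation_der_def algebra_simps mult.commute[of u gen_y] mult.commute[of v gen_x])
  also have "[:g:] dvd \<dots>"
    using assms by (intro dvd_add dvd_diff amult_mod hdiff_mod const_dvd_smult_const)
  finally show ?thesis .
qed

lemma obstruction_dvd_if_coboundary:
  assumes "hoch_coboundary2 h c" "g dvd h" "g dvd pderiv h"
  shows "[:g:] dvd obstruction h c"
proof -
  obtain f where "flinear f" "c = hoch_cob h f"
    using assms(1) by (auto simp: hoch_coboundary2_iff)
  then show ?thesis
    using assms by (simp add: obstruction_hoch_cob relation_der_mod const_dvd_smult_const dvd_diff)
qed

section \<open>The image of \<open>relation_der\<close>\<close>

lemma degree_funpow_ymult_const: "degree ((ymult h ^^ j) [:r:]) \<le> j"
  using degree_funpow_ymult[where h = h and j = j and z = "[:r:]"] by simp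

lemma coeff_funpow_ymult_const: "coeff ((ymult h ^^ j) [:r:]) j = r"
proof (induction j)
  case (Suc j)
  have "coeff ((ymult h ^^ j) [:r:]) (Suc j) = 0"
    using degree_funpow_ymult_const[where h = h and j = j and r = r] by (simp add: coeff_eq_0)
  then show ?case
    using Suc by (simp add: coeff_ymult)
qed simp

lemma coeff_funpow_ymult_const_Suc: "coeff ((ymult h ^^ Suc j) [:r:]) j = of_nat (Suc j) * hder h r"
proof (induction j)
  case 0
  then show ?case by (simp add: coeff_ymult)
next
  case (Suc j)
  then show ?case
    using coeff_funpow_ymult_const[where h = h and j = "Suc j" and r = r]
    by (simp add: coeff_ymult algebra_simps)
qed

lemma relation_der_add: "relation_der h (u + u') (v + v') = relation_der h u v + relation_der h u' v'"
  by (simp add: relation_der_def hdiff_def amult_left.add amult_right.add smult_add_right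
      sum.distrib algebra_simps)

lemma relation_der_monom_left:
  "degree (relation_der h (monom p j) 0) \<le> j \<and>
   coeff (relation_der h (monom p j) 0) j = h * pderiv p - pderiv h * p"
proof -
  define r where "r = (\<Sum>n\<le>degree h. \<Sum>i<n.
    smult (monom (coeff h n) (n - 1 - i)) (smult p ((ymult h ^^ j) (x_pow i))))"
  have eq: "relation_der h (monom p j) 0 = monom (hder h p) j - r"
    by (simp add: r_def relation_der_def hdiff_def amult_gen_y_left amult_gen_y_right ymult_monom
        monom_Suc amult_monom_left)
  have "degree r \<le> j"
    unfolding r_def x_pow_def
    by (intro degree_sum_le order.trans[OF degree_smult_le] degree_funpow_ymult_const) auto
  moreover have "coeff r j = p * pderiv h"
    by (simp only: r_def coeff_sum coeff_smult x_pow_def coeff_funpow_ymult_const pderiv_eq_sum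
        sum_distrib_left mult.left_commute)
  ultimately show ?thesis
    unfolding eq by (auto simp: hder_def mult.commute intro: degree_diff_le degree_monom_le)
qed

lemma relation_der_monom_right:
  "degree (relation_der h 0 (monom q (Suc j))) \<le> j \<and>
   coeff (relation_der h 0 (monom q (Suc j))) j = of_nat (Suc j) * h * q"
proof -
  define w where "w = (ymult h ^^ Suc j) [:[:0, 1:]:]"
  have eq: "relation_der h 0 (monom q (Suc j)) = smult q w - monom ([:0, 1:] * q) (Suc j)"
    by (simp add: relation_der_def hdiff_def w_def amult_monom_left gen_x_def amult_const_left
        smult_monom)
  have "degree (smult q w - monom ([:0, 1:] * q) (Suc j)) \<le> Suc j"
    using degree_funpow_ymult_const[where h = h and j = "Suc j" and r = "[:0, 1:]"] unfolding w_def
    by (meson degree_diff_le degree_monom_le degree_smult_le order_trans)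
  moreover have "coeff (smult q w - monom ([:0, 1:] * q) (Suc j)) (Suc j) = 0"
    using coeff_funpow_ymult_const[where h = h and j = "Suc j" and r = "[:0, 1:]"]
    by (simp add: w_def mult.commute)
  ultimately have "degree (smult q w - monom ([:0, 1:] * q) (Suc j)) \<le> j"
    by (rule degree_le_pred)
  moreover have "coeff (smult q w - monom ([:0, 1:] * q) (Suc j)) j = of_nat (Suc j) * h * q"
    using coeff_funpow_ymult_const_Suc[where h = h and j = j and r = "[:0, 1:]"]
    by (simp add: w_def hder_X ac_simps)
  ultimately show ?thesis
    by (simp add: eq)
qed

text \<open>The leading coefficient \<open>g s\<close> is reached through the Bezout identity
  \<open>\<alpha> h + \<beta> h' = g\<close>, using \<open>(u, v) = (- \<beta> s y\<^sup>j, q y\<^sup>j\<^sup>+\<^sup>1)\<close> with \<open>(j + 1) q = \<alpha> s + (\<beta> s)'\<close>.\<close>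

lemma relation_der_leading_coeff:
  fixes h g :: "'a::field_char_0 poly"
  assumes bezout: "\<alpha> * h + \<beta> * pderiv h = g"
  obtains u v where "degree (relation_der h u v) \<le> j" "coeff (relation_der h u v) j = g * s"
proof -
  define p where "p = - (\<beta> * s)"
  define q where "q = smult (inverse (of_nat (Suc j))) (\<alpha> * s + pderiv (\<beta> * s))"
  have "(of_nat (Suc j) :: 'a) \<noteq> 0"
    by (rule of_nat_neq_0)
  then have "of_nat (Suc j) * q = \<alpha> * s + pderiv (\<beta> * s)"
    by (simp add: q_def of_nat_poly del: of_nat_Suc)
  then have "of_nat (Suc j) * h * q = h * (\<alpha> * s + pderiv (\<beta> * s))"
    by (metis mult.assoc mult.commute)
  then have "h * pderiv p - pderiv h * p + of_nat (Suc j) * h * q = g * s"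
    by (simp add: p_def pderiv_minus algebra_simps flip: bezout)
  then show ?thesis
    using that[of "monom p j" "monom q (Suc j)"]
      relation_der_add[of h "monom p j" 0 0 "monom q (Suc j)"]
      relation_der_monom_left[of h p j] relation_der_monom_right[of h q j]
    by (simp add: degree_add_le)
qed

lemma relation_der_onto:
  fixes h g :: "'a::field_char_0 poly"
  assumes "g dvd h" "g dvd pderiv h" "\<alpha> * h + \<beta> * pderiv h = g" "[:g:] dvd z"
  shows "\<exists>u v. z = relation_der h u v"
  using assms(4)
proof (induction "degree z" arbitrary: z rule: less_induct)
  case less
  obtain s where s: "coeff z (degree z) = g * s"
    using less.prems by (auto simp: const_poly_dvd_iff elim: dvdE)
  obtain u v where uv: "degree (relation_der h u v) \<le> degree z"
      "coeff (relation_der h u v) (degree z) = g * s"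
    using relation_der_leading_coeff[OF assms(3)] by blast
  define z' where "z' = z - relation_der h u v"
  have "[:g:] dvd z'"
    unfolding z'_def using less.prems assms(1,2) by (intro dvd_diff relation_der_mod)
  show ?case
  proof (cases "z' = 0")
    case True
    then show ?thesis
      by (auto simp: z'_def)
  next
    case False
    have "degree z' \<le> degree z" "coeff z' (degree z) = 0"
      using uv s by (auto simp: z'_def intro: degree_diff_le)
    then have "degree z' < degree z"
      using False by (metis le_neq_implies_less leading_coeff_0_iff)
    then obtain u' v' where "z' = relation_der h u' v'"
      using less.hyps \<open>[:g:] dvd z'\<close> by blast
    then have "z = relation_der h (u + u') (v + v')"
      by (simp add: relation_der_add z'_def algebra_simps)
    then show ?thesis
      by blast
  qed
qed

lemma hoch_cocycle2_normalize:
  assumes "hoch_cocycle2 h c"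
  obtains f where "flinear f" "\<And>a. c a 1 - hoch_cob h f a 1 = 0" "\<And>b. c 1 b - hoch_cob h f 1 b = 0"
proof
  define f where "f a = ascal (coeff (coeff a 0) 0) (c 1 1)" for a
  show "flinear f"
    unfolding f_def by (rule flinear_ascal_const_coeff)
  have f_1: "f 1 = c 1 1"
    by (simp add: f_def)
  show "c a 1 - hoch_cob h f a 1 = 0" for a
    using hoch_cocycle2_unit(2)[OF assms, of a] by (simp add: hoch_cob_def f_1)
  show "c 1 b - hoch_cob h f 1 b = 0" for b
    using hoch_cocycle2_unit(1)[OF assms, of b] by (simp add: hoch_cob_def f_1)
qed

lemma normalized_cocycle_coboundary:
  fixes h :: "'a::{field_char_0,field_gcd} poly"
  assumes "hoch_cocycle2 h c" "\<And>a. c a 1 = 0" "\<And>b. c 1 b = 0"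
    and "[:gcd h (pderiv h):] dvd obstruction h c"
  shows "hoch_coboundary2 h c"
proof -
  have "\<exists>u v. - obstruction h c = relation_der h u v"
    using assms(4)
    by (intro relation_der_onto[where \<alpha> = "fst (bezout_coefficients h (pderiv h))"
          and \<beta> = "snd (bezout_coefficients h (pderiv h))"])
      (simp_all add: bezout_coefficients_fst_snd)
  then obtain u v where uv: "- obstruction h c = relation_der h u v"
    by blast
  have "obstruction h c + relation_der h u v = 0"
    unfolding uv[symmetric] by simp
  with assms(1-3) have "obstruction_in_image h c u v"
    by unfold_locales
  then show ?thesis
    by (rule obstruction_in_image.coboundary)
qed

lemma hoch_coboundary2_if_diff_hoch_cob:
  assumes "hoch_coboundary2 h (\<lambda>a b. c a b - hoch_cob h f a b)" "flinear f"
  shows "hoch_coboundary2 h c"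
proof -
  obtain f' where f': "flinear f'" "(\<lambda>a b. c a b - hoch_cob h f a b) = hoch_cob h f'"
    using assms(1) by (auto simp: hoch_coboundary2_iff)
  have "c = hoch_cob h (\<lambda>z. f' z + f z)"
  proof (intro ext)
    fix a b
    show "c a b = hoch_cob h (\<lambda>z. f' z + f z) a b"
      using fun_cong[OF fun_cong[OF f'(2), of a], of b] by (simp add: hoch_cob_add diff_eq_eq)
  qed
  then show ?thesis
    using flinear_add_fun[OF f'(1) assms(2)] by (auto simp: hoch_coboundary2_iff)
qed

theorem hoch_coboundary2_iff_obstruction_dvd:
  fixes h :: "'a::{field_char_0,field_gcd} poly"
  assumes cocycle: "hoch_cocycle2 h c"
  shows "hoch_coboundary2 h c \<longleftrightarrow> [:gcd h (pderiv h):] dvd obstruction h c"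
proof
  assume "hoch_coboundary2 h c"
  then show "[:gcd h (pderiv h):] dvd obstruction h c"
    by (rule obstruction_dvd_if_coboundary) simp_all
next
  assume obstruction_dvd: "[:gcd h (pderiv h):] dvd obstruction h c"
  obtain f where f: "flinear f" "\<And>a. c a 1 - hoch_cob h f a 1 = 0" "\<And>b. c 1 b - hoch_cob h f 1 b = 0"
    using hoch_cocycle2_normalize[OF cocycle] by blast
  have "[:gcd h (pderiv h):] dvd obstruction h (hoch_cob h f)"
    using f(1) by (intro obstruction_dvd_if_coboundary) (auto simp: hoch_coboundary2_iff)
  then have "[:gcd h (pderiv h):] dvd obstruction h (\<lambda>a b. c a b - hoch_cob h f a b)"
    using obstruction_dvd by (simp add: obstruction_diff dvd_diff)
  then have "hoch_coboundary2 h (\<lambda>a b. c a b - hoch_cob h f a b)"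
    using f cocycle by (intro normalized_cocycle_coboundary hoch_cocycle2_diff hoch_cocycle2_hoch_cob)
  then show "hoch_coboundary2 h c"
    using f(1) by (rule hoch_coboundary2_if_diff_hoch_cob)
qed

lemma HH2_zero_iff:
  fixes h :: "'a::{field_char_0,field_gcd} poly"
  shows "HH2_zero h \<longleftrightarrow> gcd h (pderiv h) = 1"
proof
  assume "HH2_zero h"
  then have "hoch_coboundary2 h (cocycle_of h 1)"
    using hoch_cocycle2_cocycle_of by (auto simp: HH2_zero_def)
  then have "[:gcd h (pderiv h):] dvd [:1:]"
    by (simp add: hoch_coboundary2_iff_obstruction_dvd hoch_cocycle2_cocycle_of obstruction_cocycle_of
        pCons_one)
  then show "gcd h (pderiv h) = 1"
    by (intro gcd_eq_1_if_dvd_const[of h _ 1]) simp_all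
next
  assume "gcd h (pderiv h) = 1"
  then show "HH2_zero h"
    by (simp add: HH2_zero_def hoch_coboundary2_iff_obstruction_dvd pCons_one)
qed

lemma HH2_infinite_dim_if_gcd_neq_1:
  fixes h :: "'a::{field_char_0,field_gcd} poly"
  assumes "gcd h (pderiv h) \<noteq> 1"
  shows "HH2_infinite_dim h"
  unfolding HH2_infinite_dim_def
proof (intro allI exI[of _ "\<lambda>i. cocycle_of h (monom 1 i)"] conjI impI)
  fix n :: nat and k :: "nat \<Rightarrow> 'a" and i
  assume coboundary: "hoch_coboundary2 h (\<lambda>a b. \<Sum>i<n. ascal (k i) (cocycle_of h (monom 1 i) a b))"
    and "i < n"
  have "[:gcd h (pderiv h):] dvd obstruction h (\<lambda>a b. \<Sum>i<n. ascal (k i) (cocycle_of h (monom 1 i) a b))"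
    using coboundary by (rule obstruction_dvd_if_coboundary) simp_all
  also have "\<dots> = (\<Sum>i<n. ascal (k i) (monom 1 i))"
    by (simp only: obstruction_sum obstruction_ascal obstruction_cocycle_of)
  also have "\<dots> = (\<Sum>i<n. monom [:k i:] i)"
    by (simp add: ascal_def smult_monom)
  finally have "[:gcd h (pderiv h):] dvd (\<Sum>i<n. monom [:k i:] i)" .
  then have "gcd h (pderiv h) dvd [:k i:]"
    using \<open>i < n\<close> by (auto simp: const_poly_dvd_iff coeff_sum elim: allE[of _ i])
  then show "k i = 0"
    using assms gcd_eq_1_if_dvd_const by blast
qed (rule hoch_cocycle2_cocycle_of)

theorem corollary3p4:
  fixes h :: "'a::{field_char_0,field_gcd} poly"
  assumes "h \<noteq> 0"
  defines "g \<equiv> gcd h (pderiv h)"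
  shows
   "(\<exists>\<Phi> :: ('a poly poly \<Rightarrow> 'a poly poly \<Rightarrow> 'a poly poly) \<Rightarrow> 'a poly poly.
       (\<forall>c1 c2. hoch_cocycle2 h c1 \<longrightarrow> hoch_cocycle2 h c2 \<longrightarrow>
           \<Phi> (\<lambda>a b. c1 a b + c2 a b) = \<Phi> c1 + \<Phi> c2) \<and>
       (\<forall>k c. hoch_cocycle2 h c \<longrightarrow> \<Phi> (\<lambda>a b. ascal k (c a b)) = ascal k (\<Phi> c)) \<and>
       (\<forall>a. \<exists>c. hoch_cocycle2 h c \<and> in_ideal h g (\<Phi> c - a)) \<and>
       (\<forall>c. hoch_cocycle2 h c \<longrightarrow> (in_ideal h g (\<Phi> c) \<longleftrightarrow> hoch_coboundary2 h c)))
    \<and> (\<exists>\<Psi> :: 'a poly poly \<Rightarrow> 'a poly poly.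
       flinear \<Psi> \<and>
       (\<forall>a b. in_Dker g (\<Psi> (amult h a b) - \<Psi> a * \<Psi> b)) \<and>
       in_Dker g (\<Psi> aone - 1) \<and>
       (\<forall>p. \<exists>a. in_Dker g (\<Psi> a - p)) \<and>
       (\<forall>a. in_Dker g (\<Psi> a) \<longleftrightarrow> in_ideal h g a))
    \<and> (HH2_zero h \<longleftrightarrow> g = 1)
    \<and> (g \<noteq> 1 \<longrightarrow> HH2_infinite_dim h)"
proof -
  have obstruction_onto: "\<exists>c. hoch_cocycle2 h c \<and> in_ideal h g (obstruction h c - a)" for a
    using hoch_cocycle2_cocycle_of obstruction_cocycle_of by (metis diff_self dvd_0_right in_ideal_iff)
  have id_onto: "\<exists>a. in_Dker g (a - p)" for p
    by (metis diff_self dvd_0_right in_Dker_def)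
  show ?thesis
    by (intro conjI exI[of _ "obstruction h"] exI[of _ "\<lambda>a. a"] allI impI flinear_id
        obstruction_onto id_onto HH2_zero_iff[of h, folded g_def]
        HH2_infinite_dim_if_gcd_neq_1[of h, folded g_def])
      (auto simp: obstruction_add obstruction_ascal in_ideal_iff g_def in_Dker_def aone_def
        hoch_coboundary2_iff_obstruction_dvd amult_mod)
qed

end
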